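(* Let $t>0$ and let $\gamma\in\mathbb{R}^p$ be a deterministic target vector satisfying \[ \big\langle \widehat\Sigma_\lambda\big((I_p+t\widehat\Sigma_\lambda)^{-1}-\exp(-t\widehat\Sigma_\lambda)\big)\beta_\lambda,\ \gamma-\beta_\lambda\big\rangle\ge 0 . \] Then the prediction risk of gradient flow at time $t$ is bounded by that of ridge regression with penalty $\lambda+1/t$: \[ \mathbb{E}\big[\|\widehat\Sigma_\lambda^{1/2}(\hat\beta^{\mathrm{GF}}_{\lambda,t}-\gamma)\|^2\,\big|\,X\big]\le 1.2985^2\,\mathbb{E}\big[\|\widehat\Sigma_\lambda^{1/2}(\hat\beta_{\lambda+1/t}-\gamma)\|^2\,\big|\,X\big]. \] Moreover, the condition on $\gamma$ (and hence this risk bound) holds in particular for every $\gamma=\beta_{\lambda'}=\widehat\Sigma_{\lambda'}^{-1}\widehat\Sigma\beta_0$ with $\lambda'\in[0,\lambda]$.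
   Context: Linear model $y=X\beta_0+\varepsilon$ with i.i.d. observations $(x_i,y_i)$, $x_i\in\mathbb{R}^p$, $\mathbb{E}[\varepsilon_i|x_i]=0$, $\mathrm{Var}(\varepsilon_i|x_i)=\sigma^2$; $\beta_0=X^+X\beta_0$. Let $\widehat\Sigma=\frac1nX^\top X$, $\widehat\Sigma_\lambda=\widehat\Sigma+\lambda I_p$ for $\lambda\ge0$ (with $\widehat\Sigma_0^{-1}=\widehat\Sigma^+$), $y_\lambda=\frac1n\widehat\Sigma_\lambda^{-1/2}X^\top y$, $\beta_\lambda=\widehat\Sigma_\lambda^{-1}\widehat\Sigma\beta_0$. The ridge estimator with penalty $\lambda'>0$ is $\hat\beta_{\lambda'}=\widehat\Sigma_{\lambda'}^{-1}\frac1nX^\top y$, and the gradient flow estimator for the ridge criterion with penalty $\lambda$ is $\hat\beta^{\mathrm{GF}}_{\lambda,t}=\widehat\Sigma_\lambda^{-1/2}(I_p-\exp(-t\widehat\Sigma_\lambda))y_\lambda$, $t\ge0$. *)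

theory Defs
  imports "HOL-Analysis.Analysis" "HOL-Probability.Probability"
begin

definition diag_mat :: "('n::finite \<Rightarrow> real) \<Rightarrow> real^'n^'n" where
  "diag_mat d = (\<chi> i j. if i = j then d i else 0)"

text \<open>Spectral functional calculus for a real symmetric matrix A:
  if A = U diag(d) U^T with U orthogonal, then f(A) = U diag(f o d) U^T.
  (For symmetric A such a decomposition exists and f(A) does not depend on it.)\<close>
definition mat_fun :: "(real \<Rightarrow> real) \<Rightarrow> real^'n^'n \<Rightarrow> real^'n::finite^'n" where
  "mat_fun f A =
     (let (U, d) = (SOME (U, d). orthogonal_matrix U \<and> A = U ** diag_mat d ** transpose U)
      in U ** diag_mat (\<lambda>i. f (d i)) ** transpose U)"

definition mat_exp :: "real^'n^'n \<Rightarrow> real^'n::finite^'n" where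
  "mat_exp A = mat_fun exp A"

definition mat_sqrt :: "real^'n^'n \<Rightarrow> real^'n::finite^'n" where
  "mat_sqrt A = mat_fun sqrt A"

definition pinv :: "real^'n^'m \<Rightarrow> real^'m::finite^'n::finite" where
  "pinv A = (THE B. A ** B ** A = A \<and> B ** A ** B = B \<and>
                    transpose (A ** B) = A ** B \<and> transpose (B ** A) = B ** A)"

definition Sig :: "real^'p^'n \<Rightarrow> real^'p::finite^'p" where
  "Sig X = (1 / real CARD('n::finite)) *\<^sub>R (transpose X ** X)"

definition Sig_lam :: "real^'p^'n::finite \<Rightarrow> real \<Rightarrow> real^'p::finite^'p" where
  "Sig_lam X lam = Sig X + lam *\<^sub>R mat 1"

definition Sig_lam_inv :: "real^'p^'n::finite \<Rightarrow> real \<Rightarrow> real^'p::finite^'p" where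
  "Sig_lam_inv X lam = (if lam = 0 then pinv (Sig X) else matrix_inv (Sig_lam X lam))"

definition Sig_lam_inv_half :: "real^'p^'n::finite \<Rightarrow> real \<Rightarrow> real^'p::finite^'p" where
  "Sig_lam_inv_half X lam = mat_sqrt (Sig_lam_inv X lam)"

definition beta_lam :: "real^'p^'n::finite \<Rightarrow> real^'p \<Rightarrow> real \<Rightarrow> real^'p::finite" where
  "beta_lam X beta0 lam = (Sig_lam_inv X lam ** Sig X) *v beta0"

definition y_lam :: "real^'p^'n::finite \<Rightarrow> real \<Rightarrow> real^'n \<Rightarrow> real^'p::finite" where
  "y_lam X lam y = (1 / real CARD('n)) *\<^sub>R (Sig_lam_inv_half X lam *v (transpose X *v y))"

definition ridge :: "real^'p^'n::finite \<Rightarrow> real \<Rightarrow> real^'n \<Rightarrow> real^'p::finite" where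
  "ridge X lam' y = Sig_lam_inv X lam' *v ((1 / real CARD('n)) *\<^sub>R (transpose X *v y))"

text \<open>Gradient flow estimator for the ridge criterion with penalty lam, at time t.\<close>
definition gf :: "real^'p^'n::finite \<Rightarrow> real \<Rightarrow> real \<Rightarrow> real^'n \<Rightarrow> real^'p::finite" where
  "gf X lam t y = (Sig_lam_inv_half X lam **
      (mat 1 - mat_exp ((- t) *\<^sub>R Sig_lam X lam))) *v y_lam X lam y"

end

(*
  Work in an orthonormal eigenbasis of Sig X, with eigenvalues mu_i >= 0 and s_i = mu_i + lam.
  There both estimators act coordinatewise on the normalised response: writing b_i for the
  coordinates of beta_lam, e_i = exp (- t s_i) and rho_i = 1 / (1 + t s_i), gradient flow
  estimates (1 - e_i) b_i and ridge with penalty lam + 1/t estimates (1 - rho_i) b_i, each plus a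
  filtered copy of the noise. The risk therefore splits into a bias and a variance sum.

  Because e_i <= rho_i, the gradient-flow bias of coordinate i is at most the ridge bias minus
  twice the i-th summand of the inner product in the hypothesis (the difference is
  s_i (rho_i^2 - e_i^2) b_i^2 >= 0). The variance ratio of coordinate i is
  ((1 - exp (- u)) (1 + u) / u)^2 with u = t s_i, and this function is bounded by 1.2985^2.
  For gamma = beta_lam' with lam' <= lam the summands of the inner product are nonnegative,
  since ridge shrinks every coordinate monotonically in the penalty.
*)
theory Submission
  imports Defs
begin

section \<open>Orthogonal diagonalisation\<close>

definition orth_diag :: "real^'n^'n \<Rightarrow> ('n::finite \<Rightarrow> real) \<Rightarrow> real^'n^'n" where
  "orth_diag U d = U ** diag_mat d ** transpose U"

lemma diag_mat_mult: "diag_mat d ** diag_mat e = diag_mat (\<lambda>i. d i * e i)"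
  by (simp add: vec_eq_iff matrix_matrix_mult_def diag_mat_def mult_delta_left mult_delta_right)

lemma diag_mat_vec: "diag_mat d *v x = (\<chi> i. d i * x $ i)"
  by (simp add: vec_eq_iff matrix_vector_mult_def diag_mat_def mult_delta_left)

lemma diag_mat_one: "diag_mat (\<lambda>i. 1) = mat 1"
  by (simp add: vec_eq_iff diag_mat_def mat_def)

lemma mult_diag_mat_nth: "(W ** diag_mat d) $ i $ j = W $ i $ j * d j"
  by (simp add: matrix_matrix_mult_def diag_mat_def mult_delta_right)

lemma diag_mat_mult_nth: "(diag_mat d ** W) $ i $ j = d i * W $ i $ j"
  by (simp add: matrix_matrix_mult_def diag_mat_def mult_delta_left)

lemma orth_diag_nth: "orth_diag U d $ i $ j = (\<Sum>k\<in>UNIV. U $ i $ k * d k * U $ j $ k)"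
  by (simp add: orth_diag_def matrix_matrix_mult_def diag_mat_def transpose_def mult_delta_left
      mult_delta_right sum_distrib_right)

lemma transpose_orth_diag: "transpose (orth_diag U d) = orth_diag U d"
  by (simp add: vec_eq_iff orth_diag_nth transpose_def mult.commute mult.left_commute)

lemma orth_diag_add: "orth_diag U d + orth_diag U e = orth_diag U (\<lambda>i. d i + e i)"
  by (simp add: vec_eq_iff orth_diag_nth sum.distrib[symmetric] algebra_simps)

lemma orth_diag_diff: "orth_diag U d - orth_diag U e = orth_diag U (\<lambda>i. d i - e i)"
  by (simp add: vec_eq_iff orth_diag_nth sum_subtractf[symmetric] algebra_simps)

lemma scaleR_orth_diag: "c *\<^sub>R orth_diag U d = orth_diag U (\<lambda>i. c * d i)"
  by (simp add: vec_eq_iff orth_diag_nth sum_distrib_left algebra_simps)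

lemma diag_mat_intertwine_fun:
  assumes "W ** diag_mat d = diag_mat e ** W"
  shows "W ** diag_mat (\<lambda>i. f (d i)) = diag_mat (\<lambda>i. f (e i)) ** W"
proof -
  have "W $ i $ j * f (d j) = f (e i) * W $ i $ j" for i j
  proof (cases "W $ i $ j = 0")
    case False
    moreover have "W $ i $ j * d j = e i * W $ i $ j"
      using arg_cong[OF assms, of "\<lambda>A. A $ i $ j"]
      by (simp add: mult_diag_mat_nth diag_mat_mult_nth)
    ultimately show ?thesis
      by (simp add: mult.commute)
  qed simp
  then show ?thesis
    by (simp add: vec_eq_iff mult_diag_mat_nth diag_mat_mult_nth)
qed

lemma penrose_conditions_unique:
  fixes A :: "real^'n::finite^'m::finite" and B C :: "real^'m^'n"
  assumes B: "A ** B ** A = A" "B ** A ** B = B" "transpose (A ** B) = A ** B"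
      "transpose (B ** A) = B ** A"
    and C: "A ** C ** A = A" "C ** A ** C = C" "transpose (A ** C) = A ** C"
      "transpose (C ** A) = C ** A"
  shows "B = C"
proof -
  have At_C: "transpose A = transpose A ** A ** C"
    using C(1,3) by (metis matrix_mul_assoc matrix_transpose_mul)
  have At_B: "transpose A = B ** A ** transpose A"
    using B(1,4) by (metis matrix_mul_assoc matrix_transpose_mul)
  have "B = B ** transpose B ** transpose A"
    using B(2,3) by (metis matrix_mul_assoc matrix_transpose_mul)
  also have "\<dots> = B ** A ** C"
    using B(2,3) At_C by (metis matrix_mul_assoc matrix_transpose_mul)
  also have "\<dots> = transpose A ** transpose C ** C"
    using C(2,4) At_B by (metis matrix_mul_assoc matrix_transpose_mul)
  also have "\<dots> = C"
    using C(2,4) by (metis matrix_transpose_mul)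
  finally show ?thesis .
qed

lemma pinv_eqI:
  fixes A :: "real^'n::finite^'m::finite" and B :: "real^'m^'n"
  assumes "A ** B ** A = A" "B ** A ** B = B" "transpose (A ** B) = A ** B"
    "transpose (B ** A) = B ** A"
  shows "pinv A = B"
  unfolding pinv_def using assms penrose_conditions_unique by (intro the_equality) blast+

lemma matrix_inv_eqI:
  fixes A B :: "real^'n::finite^'n"
  assumes "A ** B = mat 1" "B ** A = mat 1"
  shows "matrix_inv A = B"
  unfolding matrix_inv_def
proof (rule someI2[of _ B])
  fix C
  assume "A ** C = mat 1 \<and> C ** A = mat 1"
  then have "C = (C ** A) ** B"
    using assms by (metis matrix_mul_assoc matrix_mul_rid)
  then show "C = B"
    using \<open>A ** C = mat 1 \<and> C ** A = mat 1\<close> by simp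
qed (use assms in simp)

context
  fixes U :: "real^'n::finite^'n"
  assumes U: "orthogonal_matrix U"
begin

lemma orthogonal_matrix_mult_cancel:
  "U ** (transpose U ** A) = A" "transpose U ** (U ** A) = A"
  using U by (simp_all add: orthogonal_matrix_def matrix_mul_assoc)

lemma orth_diag_const: "orth_diag U (\<lambda>i. c) = c *\<^sub>R mat 1"
proof -
  have "orth_diag U (\<lambda>i. 1) = mat 1"
    using U by (simp add: orth_diag_def diag_mat_one orthogonal_matrix_def)
  then show ?thesis
    using scaleR_orth_diag[of c U "\<lambda>i. 1"] by simp
qed

lemma orth_diag_mult: "orth_diag U d ** orth_diag U e = orth_diag U (\<lambda>i. d i * e i)"
proof -
  have "orth_diag U d ** orth_diag U e
      = U ** diag_mat d ** (transpose U ** U) ** diag_mat e ** transpose U"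
    by (simp add: orth_diag_def matrix_mul_assoc)
  also have "\<dots> = U ** (diag_mat d ** diag_mat e) ** transpose U"
    using U by (simp add: orthogonal_matrix_def matrix_mul_assoc)
  finally show ?thesis
    by (simp add: diag_mat_mult orth_diag_def)
qed

lemma transpose_mult_orth_diag_vec:
  "transpose U *v (orth_diag U d *v x) = diag_mat d *v (transpose U *v x)"
proof -
  have "transpose U ** orth_diag U d = (transpose U ** U) ** diag_mat d ** transpose U"
    by (simp add: orth_diag_def matrix_mul_assoc)
  then show ?thesis
    using U
    by (simp add: orthogonal_matrix_def matrix_vector_mul_assoc del: transpose_matrix_vector)
qed

lemma orth_diag_vec_coord:
  "(transpose U *v (orth_diag U d *v x)) $ i = d i * (transpose U *v x) $ i"
  by (simp add: transpose_mult_orth_diag_vec diag_mat_vec del: transpose_matrix_vector)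

lemma norm_orthogonal_matrix_vec: "norm (U *v x) = norm x"
  using U by (simp add: orthogonal_transformation_matrix orthogonal_transformation_norm)

lemma inner_eq_sum_coord:
  "x \<bullet> y = (\<Sum>i\<in>UNIV. (transpose U *v x) $ i * (transpose U *v y) $ i)"
proof -
  have "(transpose U *v x) \<bullet> (transpose U *v y) = x \<bullet> ((U ** transpose U) *v y)"
    by (metis dot_lmul_matrix matrix_vector_mul_assoc transpose_matrix_vector transpose_transpose)
  then show ?thesis
    using U by (simp add: orthogonal_matrix_def inner_vec_def del: transpose_matrix_vector)
qed

lemma inner_orth_diag_vec:
  "(orth_diag U d *v x) \<bullet> z = (\<Sum>i\<in>UNIV. d i * (transpose U *v x) $ i * (transpose U *v z) $ i)"
  by (simp add: inner_eq_sum_coord orth_diag_vec_coord del: transpose_matrix_vector)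

lemma quadratic_form_orth_diag:
  "x \<bullet> (orth_diag U d *v x) = (\<Sum>k\<in>UNIV. d k * ((transpose U *v x) $ k)\<^sup>2)"
  by (simp add: inner_eq_sum_coord orth_diag_vec_coord power2_eq_square mult_ac
      del: transpose_matrix_vector)

lemma pinv_orth_diag: "pinv (orth_diag U d) = orth_diag U (\<lambda>i. inverse (d i))"
proof -
  have inv: "x * inverse x * x = x" "inverse x * x * inverse x = inverse x" for x :: real
    by (cases "x = 0"; simp)+
  show ?thesis
    by (intro pinv_eqI) (simp_all only: orth_diag_mult transpose_orth_diag inv)
qed

lemma matrix_inv_orth_diag:
  assumes "\<And>i. d i \<noteq> 0"
  shows "matrix_inv (orth_diag U d) = orth_diag U (\<lambda>i. inverse (d i))"
  by (rule matrix_inv_eqI) (simp_all add: orth_diag_mult assms orth_diag_const)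

end

text \<open>\<^const>\<open>mat_fun\<close> picks an arbitrary decomposition \<open>V diag(e) V\<^sup>T\<close> by \<open>SOME\<close>; it agrees
  with \<open>U diag(d) U\<^sup>T\<close> because \<open>V\<^sup>T U\<close> intertwines \<open>diag(d)\<close> with \<open>diag(e)\<close>.\<close>
lemma mat_fun_orth_diag:
  assumes U: "orthogonal_matrix U"
  shows "mat_fun f (orth_diag U d) = orth_diag U (\<lambda>i. f (d i))"
proof -
  let ?P = "\<lambda>(V, e). orthogonal_matrix V \<and> orth_diag U d = V ** diag_mat e ** transpose V"
  obtain V e where Ve: "(SOME p. ?P p) = (V, e)"
    by (cases "SOME p. ?P p")
  have "?P (U, d)"
    using U by (simp add: orth_diag_def)
  then have "?P (V, e)"
    using someI[of ?P "(U, d)"] Ve by simp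
  then have V: "orthogonal_matrix V" and eq: "orth_diag U d = orth_diag V e"
    by (simp_all add: orth_diag_def)
  have mat_fun_eq: "mat_fun f (orth_diag U d) = orth_diag V (\<lambda>i. f (e i))"
    using Ve by (simp add: mat_fun_def orth_diag_def)
  define W where "W = transpose V ** U"
  have "W ** diag_mat d = transpose V ** orth_diag U d ** U"
    using U by (simp add: W_def orth_diag_def orthogonal_matrix_def matrix_mul_assoc[symmetric])
  also have "\<dots> = diag_mat e ** W"
    using V unfolding eq by (simp add: W_def orth_diag_def orthogonal_matrix_def matrix_mul_assoc)
  finally have intertwine: "W ** diag_mat (\<lambda>i. f (d i)) = diag_mat (\<lambda>i. f (e i)) ** W"
    by (rule diag_mat_intertwine_fun)
  have "orth_diag U (\<lambda>i. f (d i)) = V ** (W ** diag_mat (\<lambda>i. f (d i))) ** transpose U"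
    by (simp add: orthogonal_matrix_mult_cancel[OF V] W_def orth_diag_def
        matrix_mul_assoc[symmetric])
  also have "\<dots> = V ** (diag_mat (\<lambda>i. f (e i)) ** W) ** transpose U"
    by (simp only: intertwine)
  also have "\<dots> = orth_diag V (\<lambda>i. f (e i))"
    using U by (simp add: W_def orth_diag_def orthogonal_matrix_def matrix_mul_assoc[symmetric])
  finally show ?thesis
    using mat_fun_eq by simp
qed

section \<open>The spectral theorem for symmetric matrices\<close>

lemma symmetric_matrix_inner_commute:
  fixes A :: "real^'n::finite^'n"
  assumes "transpose A = A"
  shows "x \<bullet> (A *v y) = y \<bullet> (A *v x)"
  by (metis assms dot_lmul_matrix inner_commute transpose_matrix_vector)

lemma nonneg_quadratic_imp_linear_coeff_zero:
  fixes p q :: real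
  assumes "q \<ge> 0" and nonneg: "\<And>s. 0 \<le> 2 * s * p + s\<^sup>2 * q"
  shows "p = 0"
proof -
  have "0 \<le> 2 * (- p / (q + 1)) * p + (- p / (q + 1))\<^sup>2 * q"
    by (rule nonneg)
  also have "\<dots> = - p\<^sup>2 * (q + 2) / (q + 1)\<^sup>2"
    using assms(1) by (simp add: divide_simps) algebra
  finally have "p\<^sup>2 * (q + 2) \<le> 0"
    using assms(1) by (simp add: divide_le_0_iff)
  then show ?thesis
    using assms(1) by (simp add: mult_le_0_iff)
qed

text \<open>First-order condition at a maximiser of the Rayleigh quotient: along \<open>v + s w\<close> with
  \<open>w = \<mu> v - A v\<close> the nonnegative defect \<open>\<mu> |y|\<^sup>2 - y \<bullet> A y\<close> equals \<open>2 s |w|\<^sup>2 + O(s\<^sup>2)\<close>,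
  which forces \<open>w = 0\<close>.\<close>
lemma rayleigh_maximiser_eigenvector:
  fixes A :: "real^'n::finite^'n"
  assumes sym: "transpose A = A" and S: "subspace S" and inv: "\<And>x. x \<in> S \<Longrightarrow> A *v x \<in> S"
    and v: "v \<in> S" "v \<bullet> v = 1"
    and max: "\<And>y. y \<in> S \<Longrightarrow> y \<bullet> (A *v y) \<le> (v \<bullet> (A *v v)) * (y \<bullet> y)"
  shows "A *v v = (v \<bullet> (A *v v)) *\<^sub>R v"
proof -
  define \<mu> where "\<mu> = v \<bullet> (A *v v)"
  define defect where "defect y = \<mu> * (y \<bullet> y) - y \<bullet> (A *v y)" for y
  define w where "w = \<mu> *\<^sub>R v - A *v v"
  have w: "w \<in> S"
    using S v inv by (simp add: w_def subspace_diff subspace_scale)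
  have defect_nonneg: "0 \<le> defect y" if "y \<in> S" for y
    using max[OF that] by (simp add: defect_def \<mu>_def)
  have "0 \<le> 2 * s * (w \<bullet> w) + s\<^sup>2 * defect w" for s
  proof -
    have "v \<bullet> (A *v w) = w \<bullet> (A *v v)"
      using sym by (rule symmetric_matrix_inner_commute)
    then have "defect (v + s *\<^sub>R w) = defect v + 2 * s * (w \<bullet> (\<mu> *\<^sub>R v - A *v v)) + s\<^sup>2 * defect w"
      by (simp add: defect_def inner_commute[of v w] algebra_simps power2_eq_square)
    moreover have "defect v = 0"
      using v(2) by (simp add: defect_def \<mu>_def)
    moreover have "v + s *\<^sub>R w \<in> S"
      using S v w by (simp add: subspace_add subspace_scale)
    ultimately show ?thesis
      using defect_nonneg[of "v + s *\<^sub>R w"] by (simp add: w_def)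
  qed
  then have "w \<bullet> w = 0"
    using defect_nonneg[OF w] nonneg_quadratic_imp_linear_coeff_zero by blast
  then show ?thesis
    by (simp add: w_def \<mu>_def)
qed

lemma symmetric_matrix_eigenvector_in_subspace:
  fixes A :: "real^'n::finite^'n"
  assumes sym: "transpose A = A" and S: "subspace S" "S \<noteq> {0}"
    and inv: "\<And>x. x \<in> S \<Longrightarrow> A *v x \<in> S"
  obtains v \<mu> where "v \<in> S" "norm v = 1" "A *v v = \<mu> *\<^sub>R v"
proof -
  define K where "K = S \<inter> sphere 0 1"
  have "compact K"
    unfolding K_def using S by (intro closed_Int_compact) (simp_all add: closed_subspace)
  moreover obtain x where "x \<in> S" "x \<noteq> 0"
    using S(2) subspace_0[OF S(1)] by auto
  then have "(1 / norm x) *\<^sub>R x \<in> K"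
    using S by (simp add: K_def subspace_scale)
  then have "K \<noteq> {}"
    by blast
  moreover have "continuous_on K (\<lambda>y. y \<bullet> (A *v y))"
    by (intro continuous_intros
        matrix_vector_mult_linear_continuous_on[THEN continuous_on_compose2]) auto
  ultimately obtain v where vK: "v \<in> K" and vmax: "\<And>y. y \<in> K \<Longrightarrow> y \<bullet> (A *v y) \<le> v \<bullet> (A *v v)"
    using continuous_attains_sup[of K "\<lambda>y. y \<bullet> (A *v y)"] by auto
  have v: "v \<in> S" "norm v = 1"
    using vK by (auto simp: K_def)
  have "y \<bullet> (A *v y) \<le> (v \<bullet> (A *v v)) * (y \<bullet> y)" if "y \<in> S" for y
  proof (cases "y = 0")
    case False
    then have "(1 / norm y) *\<^sub>R y \<in> K"
      using S that by (simp add: K_def subspace_scale)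
    then have "(y \<bullet> (A *v y)) / (norm y)\<^sup>2 \<le> v \<bullet> (A *v v)"
      using vmax[of "(1 / norm y) *\<^sub>R y"] by (simp add: matrix_vector_mult_scaleR power2_eq_square)
    then show ?thesis
      using False by (simp add: divide_le_eq dot_square_norm)
  qed simp
  then have "A *v v = (v \<bullet> (A *v v)) *\<^sub>R v"
    using v by (intro rayleigh_maximiser_eigenvector[OF sym S(1) inv]) (simp_all add: norm_eq_1)
  then show thesis
    using that v by blast
qed

lemma symmetric_matrix_eigenvector_orthogonal_complement:
  fixes A :: "real^'n::finite^'n"
  assumes sym: "transpose A = A" and S: "subspace S" and inv: "\<And>x. x \<in> S \<Longrightarrow> A *v x \<in> S"
    and v: "v \<in> S" "norm v = 1" "A *v v = \<mu> *\<^sub>R v"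
  shows "subspace {x \<in> S. v \<bullet> x = 0}"
    and "\<And>x. x \<in> {x \<in> S. v \<bullet> x = 0} \<Longrightarrow> A *v x \<in> {x \<in> S. v \<bullet> x = 0}"
    and "dim {x \<in> S. v \<bullet> x = 0} < dim S"
    and "\<And>x. x \<in> S \<Longrightarrow> x - (v \<bullet> x) *\<^sub>R v \<in> {x \<in> S. v \<bullet> x = 0}"
proof -
  show S': "subspace {x \<in> S. v \<bullet> x = 0}"
    using S unfolding subspace_def by (auto simp: inner_add_right)
  show "A *v x \<in> {x \<in> S. v \<bullet> x = 0}" if "x \<in> {x \<in> S. v \<bullet> x = 0}" for x
  proof -
    have "v \<bullet> (A *v x) = x \<bullet> (A *v v)"
      using sym by (rule symmetric_matrix_inner_commute)
    then show ?thesis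
      using that inv by (simp add: v(3) inner_commute)
  qed
  have "v \<bullet> v \<noteq> 0"
    using v(2) by (simp add: norm_eq_1)
  then have "{x \<in> S. v \<bullet> x = 0} \<subset> S"
    using v(1) by blast
  then show "dim {x \<in> S. v \<bullet> x = 0} < dim S"
    using S' S by (intro dim_psubset) (simp add: span_eq_iff[THEN iffD2])
  show "x - (v \<bullet> x) *\<^sub>R v \<in> {x \<in> S. v \<bullet> x = 0}" if "x \<in> S" for x
    using that v S by (simp add: subspace_diff subspace_scale inner_diff_right norm_eq_1)
qed

lemma symmetric_matrix_orthonormal_eigenbasis_subspace:
  fixes A :: "real^'n::finite^'n"
  assumes sym: "transpose A = A"
  shows "subspace S \<Longrightarrow> (\<And>x. x \<in> S \<Longrightarrow> A *v x \<in> S) \<Longrightarrow>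
    \<exists>B. B \<subseteq> S \<and> S \<subseteq> span B \<and> pairwise orthogonal B \<and>
        (\<forall>x\<in>B. norm x = 1 \<and> (\<exists>\<mu>. A *v x = \<mu> *\<^sub>R x))"
proof (induction "dim S" arbitrary: S rule: less_induct)
  case less
  show ?case
  proof (cases "S = {0}")
    case True
    then show ?thesis
      by (intro exI[of _ "{}"]) auto
  next
    case False
    obtain v \<mu> where v: "v \<in> S" "norm v = 1" "A *v v = \<mu> *\<^sub>R v"
      using symmetric_matrix_eigenvector_in_subspace[OF sym less.prems(1) False less.prems(2)] .
    define S' where "S' = {x \<in> S. v \<bullet> x = 0}"
    have S': "subspace S'" "\<And>x. x \<in> S' \<Longrightarrow> A *v x \<in> S'" "dim S' < dim S"
        "\<And>x. x \<in> S \<Longrightarrow> x - (v \<bullet> x) *\<^sub>R v \<in> S'"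
      using symmetric_matrix_eigenvector_orthogonal_complement[OF sym less.prems(1) _ v]
        less.prems(2)
      unfolding S'_def by blast+
    obtain B' where B': "B' \<subseteq> S'" "S' \<subseteq> span B'" "pairwise orthogonal B'"
        "\<forall>x\<in>B'. norm x = 1 \<and> (\<exists>\<mu>. A *v x = \<mu> *\<^sub>R x)"
      using less.hyps[OF S'(3,1,2)] by blast
    have "x \<in> span (insert v B')" if "x \<in> S" for x
    proof -
      have "x - (v \<bullet> x) *\<^sub>R v \<in> span (insert v B')"
        using S'(4)[OF that] B'(2) span_mono[of B' "insert v B'"] by blast
      then show ?thesis
        by (metis diff_add_cancel span_add span_base span_scale insertI1)
    qed
    moreover have "pairwise orthogonal (insert v B')"
      using B'(1,3) by (auto simp: pairwise_insert S'_def orthogonal_def inner_commute)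
    ultimately show ?thesis
      using B'(1,4) v by (intro exI[of _ "insert v B'"]) (auto simp: S'_def)
  qed
qed

theorem symmetric_matrix_orth_diag:
  fixes A :: "real^'n::finite^'n"
  assumes sym: "transpose A = A"
  obtains U d where "orthogonal_matrix U" "A = orth_diag U d"
proof -
  obtain B where B: "UNIV \<subseteq> span B" "pairwise orthogonal B"
    and B_eigen: "\<forall>x\<in>B. norm x = 1 \<and> (\<exists>\<mu>. A *v x = \<mu> *\<^sub>R x)"
    using symmetric_matrix_orthonormal_eigenbasis_subspace[OF sym, of UNIV] by auto
  have "independent B"
    using B(2) B_eigen by (intro pairwise_orthogonal_independent) force+
  then have "finite B" "card B = CARD('n)"
    using B(1) basis_card_eq_dim[of B UNIV] by (auto intro: finiteI_independent)
  then obtain g where g: "bij_betw g (UNIV :: 'n set) B"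
    using finite_same_card_bij[of "UNIV :: 'n set" B] by auto
  then have gB: "g j \<in> B" and g_inj: "i \<noteq> j \<Longrightarrow> g i \<noteq> g j" for i j
    by (auto simp: bij_betw_def inj_on_def)
  define U :: "real^'n^'n" where "U = (\<chi> i j. g j $ i)"
  define d where "d j = (SOME \<mu>. A *v g j = \<mu> *\<^sub>R g j)" for j
  have column: "column j U = g j" for j
    by (simp add: U_def column_def vec_eq_iff)
  have U: "orthogonal_matrix U"
    unfolding orthogonal_matrix_orthonormal_columns column
    using B_eigen gB g_inj B(2) by (auto simp: pairwise_def)
  have eigen: "A *v g j = d j *\<^sub>R g j" for j
    unfolding d_def using B_eigen gB[of j] by (auto intro: someI_ex)
  have "(A ** U) $ i $ j = (U ** diag_mat d) $ i $ j" for i j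
  proof -
    have "(A ** U) $ i $ j = (A *v g j) $ i"
      by (simp add: matrix_matrix_mult_def matrix_vector_mult_def U_def)
    then show ?thesis
      by (simp add: eigen mult_diag_mat_nth U_def mult.commute)
  qed
  then have "A ** U = U ** diag_mat d"
    by (simp add: vec_eq_iff)
  then have "A = orth_diag U d"
    using U by (metis matrix_mul_assoc matrix_mul_rid orth_diag_def orthogonal_matrix_def)
  with U show thesis
    using that by blast
qed

section \<open>Scalar inequalities\<close>

lemma exp_1_7921_le: "exp (1.7921 :: real) \<le> 6.0025"
proof -
  define x :: real where "x = - 1.7921"
  obtain \<xi> where "exp x = (\<Sum>m<12. x ^ m / fact m) + exp \<xi> / fact 12 * x ^ 12"
    using Maclaurin_exp_le[of x 12] by blast
  moreover have "0 \<le> exp \<xi> / fact 12 * x ^ 12"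
    by (simp add: x_def)
  moreover have "1 / 6.0025 \<le> (\<Sum>m<12. x ^ m / fact m)"
    by (simp add: x_def eval_nat_numeral fact_numeral)
  ultimately have "1 / 6.0025 \<le> exp x"
    by linarith
  then show ?thesis
    by (simp add: x_def exp_minus field_simps)
qed

lemma has_real_derivative_ln_ratio_minus_id:
  fixes a v :: real
  assumes "0 < 1 + v" "0 < 1 - a * v"
  shows "((\<lambda>v. ln (1 + v) - ln (1 - a * v) - v) has_real_derivative
      (a * v\<^sup>2 - (1 - a) * v + a) / ((1 + v) * (1 - a * v))) (at v)"
proof -
  have "((\<lambda>v. ln (1 + v) - ln (1 - a * v) - v) has_real_derivative
      1 / (1 + v) - (- a) / (1 - a * v) - 1) (at v)"
    using assms by (auto intro!: derivative_eq_intros)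
  moreover have "1 / (1 + v) - (- a) / (1 - a * v) - 1
      = (a * v\<^sup>2 - (1 - a) * v + a) / ((1 + v) * (1 - a * v))"
  proof -
    have "1 + v \<noteq> 0" "1 - a * v \<noteq> 0"
      using assms by auto
    then show ?thesis
      by (simp add: divide_simps) (simp add: algebra_simps power2_eq_square)
  qed
  ultimately show ?thesis
    by simp
qed

lemma nonneg_of_derivative_sign_between_roots:
  fixes g :: "real \<Rightarrow> real"
  assumes roots: "0 < p" "p \<le> r" and g: "0 \<le> g 0" "0 \<le> g r" and u: "0 \<le> u"
    and deriv: "\<And>x. 0 \<le> x \<Longrightarrow> x \<le> u \<or> x \<le> r \<Longrightarrow>
      \<exists>c>0. (g has_real_derivative c * ((x - p) * (x - r))) (at x)"
  shows "0 \<le> g u"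
proof -
  have increasing: "\<exists>y. (g has_real_derivative y) (at x) \<and> 0 \<le> y"
    if x: "0 \<le> x" "x \<le> u \<or> x \<le> r" "0 \<le> (x - p) * (x - r)" for x
  proof -
    obtain c where "0 < c" "(g has_real_derivative c * ((x - p) * (x - r))) (at x)"
      using deriv[OF x(1,2)] by blast
    then show ?thesis
      using x(3) by (intro exI[of _ "c * ((x - p) * (x - r))"]) simp
  qed
  have decreasing: "\<exists>y. (g has_real_derivative y) (at x) \<and> y \<le> 0"
    if x: "0 \<le> x" "x \<le> u \<or> x \<le> r" "(x - p) * (x - r) \<le> 0" for x
  proof -
    obtain c where "0 < c" "(g has_real_derivative c * ((x - p) * (x - r))) (at x)"
      using deriv[OF x(1,2)] by blast
    then show ?thesis
      using x(3) by (intro exI[of _ "c * ((x - p) * (x - r))"]) (simp add: mult_nonneg_nonpos)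
  qed
  consider "u \<le> p" | "p \<le> u" "u \<le> r" | "r \<le> u"
    by linarith
  then show ?thesis
  proof cases
    case 1
    have "g 0 \<le> g u"
    proof (rule DERIV_nonneg_imp_nondecreasing[OF u])
      show "\<exists>y. (g has_real_derivative y) (at x) \<and> 0 \<le> y" if "0 \<le> x" "x \<le> u" for x
        using that 1 roots by (intro increasing mult_nonpos_nonpos) auto
    qed
    with g show ?thesis
      by simp
  next
    case 2
    have "g r \<le> g u"
    proof (rule DERIV_nonpos_imp_nonincreasing[OF 2(2)])
      show "\<exists>y. (g has_real_derivative y) (at x) \<and> y \<le> 0" if "u \<le> x" "x \<le> r" for x
        using that 2 u by (intro decreasing mult_nonneg_nonpos) auto
    qed
    with g show ?thesis
      by simp
  next
    case 3
    have "g r \<le> g u"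
    proof (rule DERIV_nonneg_imp_nondecreasing[OF 3])
      show "\<exists>y. (g has_real_derivative y) (at x) \<and> 0 \<le> y" if "r \<le> x" "x \<le> u" for x
        using that roots by (intro increasing mult_nonneg_nonneg) auto
    qed
    with g show ?thesis
      by simp
  qed
qed

text \<open>The quadratic is palindromic, so its roots are \<open>r\<close> and \<open>1 / r\<close>.\<close>
lemma quadratic_0_2985_roots:
  obtains r :: real where "1.792 \<le> r" "r \<le> 1.7921"
    "\<And>v :: real. 0.2985 * v\<^sup>2 - (1 - 0.2985) * v + 0.2985 = 0.2985 * ((v - 1 / r) * (v - r))"
proof -
  define a :: real where "a = 0.2985"
  define Q where "Q v = a * v\<^sup>2 - (1 - a) * v + a" for v
  have "Q 1.792 \<le> 0" "0 \<le> Q 1.7921"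
    unfolding Q_def a_def by (simp_all add: power2_eq_square)
  moreover have "continuous_on {1.792..1.7921} Q"
    unfolding Q_def by (intro continuous_intros)
  ultimately obtain r where r: "1.792 \<le> r" "r \<le> 1.7921" and Q_r: "Q r = 0"
    using IVT'[of Q "1.792" 0 "1.7921"] by auto
  have "a * (r + 1 / r) = 1 - a"
    using Q_r r by (simp add: Q_def field_simps power2_eq_square)
  moreover have "a * ((v - 1 / r) * (v - r)) = a * v\<^sup>2 - a * (r + 1 / r) * v + a" for v
    using r by (simp add: field_simps power2_eq_square)
  ultimately show thesis
    using that r by (simp add: a_def)
qed

lemma ln_ratio_ge_id_near_root:
  fixes r :: real
  assumes "1.792 \<le> r" "r \<le> 1.7921"
  shows "r \<le> ln (1 + r) - ln (1 - 0.2985 * r)"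
proof -
  have "exp r \<le> 6.0025"
    using assms exp_1_7921_le by (meson exp_le_cancel_iff order.trans)
  also have "\<dots> \<le> (1 + r) / (1 - 0.2985 * r)"
    using assms by (simp add: field_simps)
  finally have "r \<le> ln ((1 + r) / (1 - 0.2985 * r))"
    using assms by (subst ln_ge_iff) simp_all
  then show ?thesis
    using assms by (simp add: ln_div)
qed

text \<open>This is \<open>(1 - exp (- u)) (1 + u) \<le> 1.2985 u\<close> in logarithmic form. The ratio of the two sides
  peaks at about \<open>1.29843\<close> near \<open>u = 1.79\<close>, so there is little slack. The derivative of the difference
  has the sign of \<open>0.2985 v\<^sup>2 - 0.7015 v + 0.2985\<close>, so the difference rises, falls and rises
  again, and only its value at the larger root \<open>r \<approx> 1.792\<close> needs a numerical check.\<close>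
lemma ln_ratio_ge_id:
  fixes u :: real
  assumes u: "0 \<le> u" "0.2985 * u < 1"
  shows "u \<le> ln (1 + u) - ln (1 - 0.2985 * u)"
proof -
  define g where "g = (\<lambda>v. ln (1 + v) - ln (1 - 0.2985 * v) - v :: real)"
  obtain r :: real where r: "1.792 \<le> r" "r \<le> 1.7921"
    and Q: "\<And>v :: real. 0.2985 * v\<^sup>2 - (1 - 0.2985) * v + 0.2985 = 0.2985 * ((v - 1 / r) * (v - r))"
    using quadratic_0_2985_roots by blast
  have "1 \<le> r * r"
    using r mult_mono[of 1 r 1 r] by simp
  then have roots: "0 < 1 / r" "1 / r \<le> r"
    using r by (simp_all add: field_simps)
  have g: "0 \<le> g 0" "0 \<le> g r"
    using ln_ratio_ge_id_near_root[OF r] by (simp_all add: g_def)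
  have deriv: "\<exists>c>0. (g has_real_derivative c * ((x - 1 / r) * (x - r))) (at x)"
    if "0 \<le> x" "x \<le> u \<or> x \<le> r" for x
  proof -
    have "0.2985 * x < (1 :: real)"
      using that u r by auto
    then have "0 < (1 + x) * (1 - 0.2985 * x)"
      using that(1) by simp
    moreover have "(g has_real_derivative
        0.2985 / ((1 + x) * (1 - 0.2985 * x)) * ((x - 1 / r) * (x - r))) (at x)"
      using has_real_derivative_ln_ratio_minus_id[of x "0.2985"] \<open>0.2985 * x < 1\<close> that(1)
      unfolding Q g_def by simp
    ultimately show ?thesis
      by (intro exI[of _ "0.2985 / ((1 + x) * (1 - 0.2985 * x))"]) simp
  qed
  have "0 \<le> g u"
    by (rule nonneg_of_derivative_sign_between_roots[OF roots g u(1) deriv])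
  then show ?thesis
    by (simp add: g_def)
qed

lemma one_minus_exp_neg_mult_le:
  fixes u :: real
  assumes "0 \<le> u"
  shows "(1 - exp (- u)) * (1 + u) \<le> 1.2985 * u"
proof (cases "0.2985 * u < 1")
  case True
  then have "u \<le> ln ((1 + u) / (1 - 0.2985 * u))"
    using ln_ratio_ge_id[OF assms] assms by (simp add: ln_div)
  then have "exp u \<le> (1 + u) / (1 - 0.2985 * u)"
    using True assms by (subst (asm) ln_ge_iff) auto
  then have "1 - 0.2985 * u \<le> (1 + u) * exp (- u)"
    using True by (simp add: exp_minus field_simps)
  then show ?thesis
    by (simp add: algebra_simps)
next
  case False
  have "(1 - exp (- u)) * (1 + u) \<le> 1 + u"
    using assms by (simp add: algebra_simps)
  also have "\<dots> \<le> 1.2985 * u"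
    using False by simp
  finally show ?thesis .
qed

lemma gradient_flow_filter_le_ridge_filter:
  fixes s t :: real
  assumes "0 < s" "0 < t"
  shows "inverse s * (1 - exp (- t * s)) \<le> 1.2985 * inverse (s + 1 / t)"
proof -
  have ne: "1 + t * s \<noteq> 0"
    using assms by (smt (verit) mult_pos_pos)
  then have "inverse s * (1 - exp (- t * s))
      = (1 - exp (- (t * s))) * (1 + t * s) / (s * (1 + t * s))"
    by (simp add: divide_inverse)
  also have "\<dots> \<le> 1.2985 * (t * s) / (s * (1 + t * s))"
    using assms by (intro divide_right_mono one_minus_exp_neg_mult_le) simp_all
  also have "\<dots> = 1.2985 * (t / (1 + t * s))"
    using assms by simp
  also have "t / (1 + t * s) = inverse (s + 1 / t)"
    using assms ne by (simp add: field_simps)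
  finally show ?thesis .
qed

lemma exp_neg_le_inverse_one_plus:
  fixes x :: real
  assumes "0 \<le> x"
  shows "exp (- x) \<le> inverse (1 + x)"
  using assms exp_ge_add_one_self[of x] by (simp add: exp_minus le_imp_inverse_le)

lemma shrinkage_sq_le:
  fixes s e \<rho> x c :: real
  assumes "0 \<le> s" "0 \<le> e" "e \<le> \<rho>"
  shows "s * ((1 - e) * x - c)\<^sup>2 \<le> s * ((1 - \<rho>) * x - c)\<^sup>2 - 2 * (s * (\<rho> - e) * x * (c - x))"
proof -
  have "s * ((1 - \<rho>) * x - c)\<^sup>2 - 2 * (s * (\<rho> - e) * x * (c - x)) - s * ((1 - e) * x - c)\<^sup>2
      = s * (\<rho>\<^sup>2 - e\<^sup>2) * x\<^sup>2"
    by (simp add: algebra_simps power2_eq_square)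
  moreover have "0 \<le> s * (\<rho>\<^sup>2 - e\<^sup>2) * x\<^sup>2"
    using assms by (simp add: power_mono)
  ultimately show ?thesis
    by linarith
qed

lemma ridge_coefficient_eq:
  fixes mu lam t b :: real
  assumes "0 \<le> mu" "0 \<le> lam" "0 < t"
  shows "inverse (mu + lam + 1 / t) * (mu * b)
    = (1 - inverse (1 + t * (mu + lam))) * (inverse (mu + lam) * (mu * b))"
proof (cases "mu + lam = 0")
  case False
  define s where "s = mu + lam"
  have s: "0 < s"
    using False assms by (simp add: s_def)
  then have ne: "1 + t * s \<noteq> 0"
    using assms by (smt (verit) mult_pos_pos)
  have "1 - inverse (1 + t * s) = t * s / (1 + t * s)"
    using ne by (simp add: field_simps)
  moreover have "inverse (s + 1 / t) = t / (1 + t * s)"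
    using assms ne by (simp add: field_simps)
  ultimately show ?thesis
    using s by (simp add: s_def add.assoc)
qed (use assms in simp)

lemma gf_ridge_variance_coord_le:
  fixes mu lam t :: real
  assumes "0 \<le> mu" "0 \<le> lam" "0 < t"
  shows "(mu + lam) * mu * (inverse (mu + lam) * (1 - exp (- t * (mu + lam))))\<^sup>2
    \<le> 1.2985\<^sup>2 * ((mu + lam) * mu * (inverse (mu + lam + 1 / t))\<^sup>2)"
proof (cases "mu + lam = 0")
  case False
  then have "0 < mu + lam"
    using assms by simp
  then have "(inverse (mu + lam) * (1 - exp (- t * (mu + lam))))\<^sup>2
      \<le> (1.2985 * inverse (mu + lam + 1 / t))\<^sup>2"
    using assms by (intro power_mono gradient_flow_filter_le_ridge_filter) (simp_all add: add.assoc)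
  then have "(mu + lam) * mu * (inverse (mu + lam) * (1 - exp (- t * (mu + lam))))\<^sup>2
      \<le> (mu + lam) * mu * (1.2985 * inverse (mu + lam + 1 / t))\<^sup>2"
    using assms by (intro mult_left_mono) simp_all
  then show ?thesis
    by (simp only: power_mult_distrib mult_ac)
qed simp

lemma ridge_path_coord_mult_increment_nonneg:
  fixes mu lam lam' b :: real
  assumes "0 \<le> mu" "0 \<le> lam'" "lam' \<le> lam"
  shows "0 \<le> inverse (mu + lam) * (mu * b)
    * (inverse (mu + lam') * (mu * b) - inverse (mu + lam) * (mu * b))"
proof (cases "mu = 0")
  case False
  then have "inverse (mu + lam) \<le> inverse (mu + lam')"
    using assms by (intro le_imp_inverse_le) auto
  then have "0 \<le> inverse (mu + lam) * (inverse (mu + lam') - inverse (mu + lam)) * (mu * b)\<^sup>2"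
    using assms by (intro mult_nonneg_nonneg) simp_all
  also have "\<dots> = inverse (mu + lam) * (mu * b)
      * (inverse (mu + lam') * (mu * b) - inverse (mu + lam) * (mu * b))"
    by (simp add: algebra_simps power2_eq_square)
  finally show ?thesis .
qed simp

lemma spectral_risk_sum_le:
  fixes mu b c :: "'i::finite \<Rightarrow> real" and lam t k :: real
  defines "s i \<equiv> mu i + lam"
  assumes mu: "\<And>i. 0 \<le> mu i" and lam: "0 \<le> lam" and t: "0 < t" and k: "0 \<le> k"
    and cond: "0 \<le> (\<Sum>i\<in>UNIV. s i * (inverse (1 + t * s i) - exp (- t * s i)) * b i * (c i - b i))"
  shows "(\<Sum>i\<in>UNIV. s i * ((1 - exp (- t * s i)) * b i - c i)\<^sup>2)
        + k * (\<Sum>i\<in>UNIV. s i * mu i * (inverse (s i) * (1 - exp (- t * s i)))\<^sup>2)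
    \<le> 1.2985\<^sup>2 * ((\<Sum>i\<in>UNIV. s i * ((1 - inverse (1 + t * s i)) * b i - c i)\<^sup>2)
        + k * (\<Sum>i\<in>UNIV. s i * mu i * (inverse (s i + 1 / t))\<^sup>2))"
proof -
  define e where "e i = exp (- t * s i)" for i
  define \<rho> where "\<rho> i = inverse (1 + t * s i)" for i
  have s: "0 \<le> s i" and e: "0 \<le> e i" "e i \<le> \<rho> i" for i
    using lam t mu[of i] exp_neg_le_inverse_one_plus[of "t * s i"]
    by (simp_all add: s_def e_def \<rho>_def)
  have "(\<Sum>i\<in>UNIV. s i * ((1 - e i) * b i - c i)\<^sup>2)
      \<le> (\<Sum>i\<in>UNIV. s i * ((1 - \<rho> i) * b i - c i)\<^sup>2 - 2 * (s i * (\<rho> i - e i) * b i * (c i - b i)))"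
    by (intro sum_mono shrinkage_sq_le s e)
  also have "\<dots> \<le> (\<Sum>i\<in>UNIV. s i * ((1 - \<rho> i) * b i - c i)\<^sup>2)"
    using cond by (simp add: sum_subtractf sum_distrib_left[symmetric] e_def \<rho>_def)
  also have "\<dots> \<le> 1.2985\<^sup>2 * (\<Sum>i\<in>UNIV. s i * ((1 - \<rho> i) * b i - c i)\<^sup>2)"
    using s mult_right_mono[of 1 "1.2985\<^sup>2 :: real"] by (simp add: sum_nonneg)
  finally have bias: "(\<Sum>i\<in>UNIV. s i * ((1 - e i) * b i - c i)\<^sup>2)
      \<le> 1.2985\<^sup>2 * (\<Sum>i\<in>UNIV. s i * ((1 - \<rho> i) * b i - c i)\<^sup>2)" .
  have "(\<Sum>i\<in>UNIV. s i * mu i * (inverse (s i) * (1 - e i))\<^sup>2)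
      \<le> 1.2985\<^sup>2 * (\<Sum>i\<in>UNIV. s i * mu i * (inverse (s i + 1 / t))\<^sup>2)"
    unfolding sum_distrib_left s_def e_def by (intro sum_mono gf_ridge_variance_coord_le mu lam t)
  then have variance: "k * (\<Sum>i\<in>UNIV. s i * mu i * (inverse (s i) * (1 - e i))\<^sup>2)
      \<le> 1.2985\<^sup>2 * (k * (\<Sum>i\<in>UNIV. s i * mu i * (inverse (s i + 1 / t))\<^sup>2))"
    using k by (subst mult.left_commute) (rule mult_left_mono)
  from bias variance show ?thesis
    by (simp add: distrib_left e_def \<rho>_def)
qed

section \<open>White noise\<close>

lemma norm_vec_sq: "(norm (x :: real^'n::finite))\<^sup>2 = (\<Sum>i\<in>UNIV. (x $ i)\<^sup>2)"
  unfolding dot_square_norm[symmetric] inner_vec_def by (simp add: power2_eq_square)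

lemma sum_mult_sq:
  "(\<Sum>j\<in>UNIV. c j * x j)\<^sup>2 = (\<Sum>j\<in>UNIV. \<Sum>k\<in>UNIV. (c j * c k) * (x j * x k :: real))"
  by (simp add: power2_eq_square sum_product algebra_simps)

locale white_noise = prob_space M for M :: "'a measure" +
  fixes eps :: "'a \<Rightarrow> real^'n::finite" and sigma :: real
  assumes integrable_eps: "\<And>i. integrable M (\<lambda>\<omega>. eps \<omega> $ i)"
    and integrable_eps_mult: "\<And>i j. integrable M (\<lambda>\<omega>. eps \<omega> $ i * eps \<omega> $ j)"
    and expectation_eps: "\<And>i. expectation (\<lambda>\<omega>. eps \<omega> $ i) = 0"
    and expectation_eps_mult:
      "\<And>i j. expectation (\<lambda>\<omega>. eps \<omega> $ i * eps \<omega> $ j) = (if i = j then sigma\<^sup>2 else 0)"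
begin

lemma integrable_linear_form: "integrable M (\<lambda>\<omega>. \<Sum>j\<in>UNIV. c j * eps \<omega> $ j)"
  by (intro Bochner_Integration.integrable_sum Bochner_Integration.integrable_mult_right
      integrable_eps)

lemma expectation_linear_form: "expectation (\<lambda>\<omega>. \<Sum>j\<in>UNIV. c j * eps \<omega> $ j) = 0"
  by (simp add: Bochner_Integration.integral_sum integrable_eps expectation_eps)

lemma integrable_linear_form_sq: "integrable M (\<lambda>\<omega>. (\<Sum>j\<in>UNIV. c j * eps \<omega> $ j)\<^sup>2)"
  unfolding sum_mult_sq
  by (intro Bochner_Integration.integrable_sum Bochner_Integration.integrable_mult_right
      integrable_eps_mult)

lemma expectation_linear_form_sq:
  "expectation (\<lambda>\<omega>. (\<Sum>j\<in>UNIV. c j * eps \<omega> $ j)\<^sup>2) = sigma\<^sup>2 * (\<Sum>j\<in>UNIV. (c j)\<^sup>2)"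
  unfolding sum_mult_sq
  by (simp add: Bochner_Integration.integral_sum integrable_eps_mult expectation_eps_mult
      mult_delta_right sum_distrib_left power2_eq_square mult.commute)

lemma expectation_norm_affine_sq:
  "expectation (\<lambda>\<omega>. (norm (a + L *v eps \<omega>))\<^sup>2)
    = (norm a)\<^sup>2 + sigma\<^sup>2 * (\<Sum>i\<in>UNIV. \<Sum>j\<in>UNIV. (L $ i $ j)\<^sup>2)"
proof -
  define l where "l i \<omega> = (\<Sum>j\<in>UNIV. L $ i $ j * eps \<omega> $ j)" for i \<omega>
  define f where "f i = (\<lambda>\<omega>. (a $ i)\<^sup>2 + 2 * a $ i * l i \<omega> + (l i \<omega>)\<^sup>2)" for i
  have integrable_f: "integrable M (f i)" for i
    unfolding f_def l_def using integrable_linear_form integrable_linear_form_sq by simp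
  have "(norm (a + L *v eps \<omega>))\<^sup>2 = (\<Sum>i\<in>UNIV. f i \<omega>)" for \<omega>
    by (simp add: norm_vec_sq f_def l_def matrix_vector_mult_def power2_sum add_ac)
  then have "expectation (\<lambda>\<omega>. (norm (a + L *v eps \<omega>))\<^sup>2) = (\<Sum>i\<in>UNIV. expectation (f i))"
    using integrable_f by simp
  also have "\<dots> = (\<Sum>i\<in>UNIV. (a $ i)\<^sup>2 + sigma\<^sup>2 * (\<Sum>j\<in>UNIV. (L $ i $ j)\<^sup>2))"
    using integrable_linear_form integrable_linear_form_sq
    by (simp add: f_def l_def expectation_linear_form expectation_linear_form_sq prob_space)
  also have "\<dots> = (norm a)\<^sup>2 + sigma\<^sup>2 * (\<Sum>i\<in>UNIV. \<Sum>j\<in>UNIV. (L $ i $ j)\<^sup>2)"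
    by (simp add: norm_vec_sq sum.distrib sum_distrib_left)
  finally show ?thesis .
qed

lemma expectation_spectral_filter_error:
  fixes U :: "real^'p::finite^'p" and Y :: "real^'n^'p"
  assumes U: "orthogonal_matrix U"
  shows "expectation (\<lambda>\<omega>. (norm (orth_diag U k *v (orth_diag U \<phi> *v (w + Y *v eps \<omega>) - \<gamma>)))\<^sup>2)
    = (\<Sum>i\<in>UNIV. (k i * (\<phi> i * (transpose U *v w) $ i - (transpose U *v \<gamma>) $ i))\<^sup>2)
      + sigma\<^sup>2 * (\<Sum>i\<in>UNIV. (k i * \<phi> i)\<^sup>2 * (\<Sum>j\<in>UNIV. ((transpose U ** Y) $ i $ j)\<^sup>2))"
proof -
  define a :: "real^'p" where
    "a = (\<chi> i. k i * (\<phi> i * (transpose U *v w) $ i - (transpose U *v \<gamma>) $ i))"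
  define L where "L = diag_mat (\<lambda>i. k i * \<phi> i) ** (transpose U ** Y)"
  have "transpose U *v (orth_diag U k *v (orth_diag U \<phi> *v (w + Y *v e) - \<gamma>)) = a + L *v e" for e
    by (simp add: vec_eq_iff a_def L_def orth_diag_vec_coord[OF U] diag_mat_vec algebra_simps
        matrix_vector_mul_assoc[symmetric] del: transpose_matrix_vector)
  then have "norm (orth_diag U k *v (orth_diag U \<phi> *v (w + Y *v e) - \<gamma>)) = norm (a + L *v e)" for e
    by (metis U norm_orthogonal_matrix_vec orthogonal_matrix_transpose)
  then have "expectation (\<lambda>\<omega>. (norm (orth_diag U k *v (orth_diag U \<phi> *v (w + Y *v eps \<omega>) - \<gamma>)))\<^sup>2)
      = (norm a)\<^sup>2 + sigma\<^sup>2 * (\<Sum>i\<in>UNIV. \<Sum>j\<in>UNIV. (L $ i $ j)\<^sup>2)"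
    by (simp add: expectation_norm_affine_sq)
  then show ?thesis
    by (simp add: a_def L_def norm_vec_sq diag_mat_mult_nth power_mult_distrib sum_distrib_left)
qed

end

section \<open>Spectral form of the estimators\<close>

lemma transpose_Sig: "transpose (Sig X) = Sig X"
  by (simp add: Sig_def transpose_scalar matrix_transpose_mul)

lemma Sig_quadratic_form_nonneg: "0 \<le> x \<bullet> (Sig X *v x)"
proof -
  have "x \<bullet> ((transpose X ** X) *v x) = (X *v x) \<bullet> (X *v x)"
    by (metis dot_lmul_matrix inner_commute matrix_vector_mul_assoc transpose_matrix_vector)
  then show ?thesis
    by (simp add: Sig_def scaleR_matrix_vector_assoc[symmetric])
qed

locale sample_cov_eigen =
  fixes X :: "real^'p::finite^'n::finite" and U :: "real^'p^'p" and mu :: "'p \<Rightarrow> real"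
  assumes orthogonal_U: "orthogonal_matrix U"
    and Sig_eq: "Sig X = orth_diag U mu"
    and eigenvalues_nonneg: "0 \<le> mu i"

lemma sample_cov_eigen_exists:
  fixes X :: "real^'p::finite^'n::finite"
  obtains U mu where "sample_cov_eigen X U mu"
proof -
  obtain U mu where U: "orthogonal_matrix U" and Sig: "Sig X = orth_diag U mu"
    using symmetric_matrix_orth_diag[OF transpose_Sig] .
  have "0 \<le> mu i" for i
  proof -
    have "transpose U *v (U *v axis i 1) = axis i 1"
      using U
      by (simp add: matrix_vector_mul_assoc orthogonal_matrix_def del: transpose_matrix_vector)
    then have "(U *v axis i 1) \<bullet> (Sig X *v (U *v axis i 1)) = mu i"
      by (simp add: Sig quadratic_form_orth_diag[OF U] axis_def power2_eq_square mult_delta_left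
          mult_delta_right del: transpose_matrix_vector)
    then show ?thesis
      using Sig_quadratic_form_nonneg by metis
  qed
  then show thesis
    using that U Sig by (blast intro: sample_cov_eigen.intro)
qed

context sample_cov_eigen
begin

lemma Sig_lam_eq: "Sig_lam X l = orth_diag U (\<lambda>i. mu i + l)"
  unfolding Sig_lam_def Sig_eq orth_diag_const[OF orthogonal_U, symmetric] orth_diag_add ..

lemma scaleR_Sig_lam_eq: "c *\<^sub>R Sig_lam X l = orth_diag U (\<lambda>i. c * (mu i + l))"
  by (simp add: Sig_lam_eq scaleR_orth_diag)

text \<open>At \<open>l = 0\<close> the pseudoinverse inverts the nonzero eigenvalues and keeps the zero ones,
  which matches \<open>inverse 0 = 0\<close>.\<close>
lemma Sig_lam_inv_eq:
  assumes "0 \<le> l"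
  shows "Sig_lam_inv X l = orth_diag U (\<lambda>i. inverse (mu i + l))"
proof (cases "l = 0")
  case True
  then show ?thesis
    by (simp add: Sig_lam_inv_def Sig_eq pinv_orth_diag[OF orthogonal_U])
next
  case False
  then have "mu i + l \<noteq> 0" for i
    using assms eigenvalues_nonneg[of i] by simp
  with False show ?thesis
    by (simp add: Sig_lam_inv_def Sig_lam_eq matrix_inv_orth_diag[OF orthogonal_U])
qed

lemma mat_exp_scaleR_Sig_lam:
  "mat_exp (c *\<^sub>R Sig_lam X l) = orth_diag U (\<lambda>i. exp (c * (mu i + l)))"
  by (simp add: mat_exp_def scaleR_Sig_lam_eq mat_fun_orth_diag[OF orthogonal_U])

lemma gf_eq:
  assumes "0 \<le> lam"
  shows "gf X lam t y = orth_diag U (\<lambda>i. inverse (mu i + lam) * (1 - exp (- t * (mu i + lam))))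
    *v ((1 / real CARD('n)) *\<^sub>R (transpose X *v y))"
proof -
  have E: "mat 1 - mat_exp ((- t) *\<^sub>R Sig_lam X lam)
      = orth_diag U (\<lambda>i. 1 - exp (- t * (mu i + lam)))"
    unfolding mat_exp_scaleR_Sig_lam orth_diag_const[OF orthogonal_U, of 1, simplified, symmetric]
      orth_diag_diff by simp
  have H: "Sig_lam_inv_half X lam = orth_diag U (\<lambda>i. sqrt (inverse (mu i + lam)))"
    using assms by (simp add: Sig_lam_inv_half_def mat_sqrt_def Sig_lam_inv_eq
        mat_fun_orth_diag[OF orthogonal_U])
  have sqrt_sandwich: "sqrt (inverse s) * x * sqrt (inverse s) = inverse s * x"
    if "0 \<le> s" for s x :: real
  proof -
    have "sqrt (inverse s) * x * sqrt (inverse s) = (sqrt (inverse s) * sqrt (inverse s)) * x"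
      by (simp only: mult_ac)
    then show ?thesis
      using that by simp
  qed
  have HEH: "Sig_lam_inv_half X lam ** (mat 1 - mat_exp ((- t) *\<^sub>R Sig_lam X lam))
        ** Sig_lam_inv_half X lam
      = orth_diag U (\<lambda>i. inverse (mu i + lam) * (1 - exp (- t * (mu i + lam))))"
    using assms eigenvalues_nonneg unfolding H E orth_diag_mult[OF orthogonal_U]
    by (simp add: sqrt_sandwich)
  show ?thesis
    unfolding gf_def y_lam_def
    by (simp only: matrix_vector_mult_scaleR matrix_vector_mul_assoc matrix_mul_assoc HEH)
qed

lemma ridge_eq:
  assumes "0 \<le> l"
  shows "ridge X l y
    = orth_diag U (\<lambda>i. inverse (mu i + l)) *v ((1 / real CARD('n)) *\<^sub>R (transpose X *v y))"
  using assms by (simp add: ridge_def Sig_lam_inv_eq)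

lemma beta_lam_coord:
  assumes "0 \<le> l"
  shows "(transpose U *v beta_lam X beta0 l) $ i
    = inverse (mu i + l) * (mu i * (transpose U *v beta0) $ i)"
  using assms
  by (simp add: beta_lam_def Sig_lam_inv_eq Sig_eq orth_diag_vec_coord[OF orthogonal_U]
      matrix_vector_mul_assoc[symmetric] del: transpose_matrix_vector)

lemma gf_ridge_gap_eq:
  assumes "0 \<le> lam" "0 \<le> t"
  shows "Sig_lam X lam
      ** (matrix_inv (mat 1 + t *\<^sub>R Sig_lam X lam) - mat_exp ((- t) *\<^sub>R Sig_lam X lam))
    = orth_diag U (\<lambda>i. (mu i + lam) * (inverse (1 + t * (mu i + lam)) - exp (- t * (mu i + lam))))"
proof -
  have "1 + t * (mu i + lam) \<noteq> 0" for i
    using assms eigenvalues_nonneg[of i] by (smt (verit) mult_nonneg_nonneg)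
  moreover have "mat 1 + t *\<^sub>R Sig_lam X lam = orth_diag U (\<lambda>i. 1 + t * (mu i + lam))"
    unfolding scaleR_Sig_lam_eq orth_diag_const[OF orthogonal_U, of 1, simplified, symmetric]
      orth_diag_add ..
  ultimately show ?thesis
    unfolding mat_exp_scaleR_Sig_lam
    by (simp add: matrix_inv_orth_diag[OF orthogonal_U] orth_diag_diff Sig_lam_eq
        orth_diag_mult[OF orthogonal_U])
qed

lemma row_norms_scaled_design:
  "(\<Sum>j\<in>UNIV. ((transpose U ** ((1 / real CARD('n)) *\<^sub>R transpose X)) $ i $ j)\<^sup>2)
    = mu i / real CARD('n)"
proof -
  define M where "M = transpose U ** ((1 / real CARD('n)) *\<^sub>R transpose X)"
  have "M ** transpose M = (1 / real CARD('n)) *\<^sub>R (transpose U ** Sig X ** U)"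
    by (simp add: M_def Sig_def matrix_transpose_mul matrix_mul_assoc matrix_scalar_ac
        transpose_scalar scalar_matrix_assoc)
  also have "transpose U ** Sig X ** U = diag_mat mu"
    using orthogonal_U
    by (simp add: Sig_eq orth_diag_def orthogonal_matrix_def matrix_mul_assoc[symmetric]
        orthogonal_matrix_mult_cancel[OF orthogonal_U])
  finally have "(M ** transpose M) $ i $ i = mu i / real CARD('n)"
    by (simp add: diag_mat_def)
  then show ?thesis
    by (simp add: M_def matrix_matrix_mult_def transpose_def power2_eq_square)
qed

lemma inner_gap_beta_lam_eq:
  assumes "0 \<le> lam" "0 \<le> t"
  shows "inner ((Sig_lam X lam ** (matrix_inv (mat 1 + t *\<^sub>R Sig_lam X lam)
                                 - mat_exp ((- t) *\<^sub>R Sig_lam X lam))) *v beta_lam X beta0 lam) z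
    = (\<Sum>i\<in>UNIV. (mu i + lam) * (inverse (1 + t * (mu i + lam)) - exp (- t * (mu i + lam)))
        * (transpose U *v beta_lam X beta0 lam) $ i * (transpose U *v z) $ i)"
  unfolding gf_ridge_gap_eq[OF assms] inner_orth_diag_vec[OF orthogonal_U] ..

end

lemma normalized_response_eq:
  fixes X :: "real^'p::finite^'n::finite"
  shows "(1 / real CARD('n)) *\<^sub>R (transpose X *v (X *v beta0 + e))
    = Sig X *v beta0 + ((1 / real CARD('n)) *\<^sub>R transpose X) *v e"
  by (simp add: Sig_def matrix_vector_right_distrib scaleR_right_distrib scaleR_matrix_vector_assoc
      matrix_vector_mul_assoc del: transpose_matrix_vector)

section \<open>Gradient flow versus ridge regression\<close>

lemma (in white_noise) spectral_estimator_risk: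
  fixes X :: "real^'p::finite^'n"
  assumes "sample_cov_eigen X U mu" "0 \<le> lam"
  shows "expectation (\<lambda>\<omega>. (norm (mat_sqrt (Sig_lam X lam) *v
      (orth_diag U \<phi> *v ((1 / real CARD('n)) *\<^sub>R (transpose X *v (X *v beta0 + eps \<omega>))) - \<gamma>)))\<^sup>2)
    = (\<Sum>i\<in>UNIV. (mu i + lam)
          * (\<phi> i * (mu i * (transpose U *v beta0) $ i) - (transpose U *v \<gamma>) $ i)\<^sup>2)
      + sigma\<^sup>2 / real CARD('n) * (\<Sum>i\<in>UNIV. (mu i + lam) * mu i * (\<phi> i)\<^sup>2)"
proof -
  interpret sample_cov_eigen X U mu
    by fact
  have "mat_sqrt (Sig_lam X lam) = orth_diag U (\<lambda>i. sqrt (mu i + lam))"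
    by (simp add: mat_sqrt_def Sig_lam_eq mat_fun_orth_diag[OF orthogonal_U])
  moreover have "(sqrt (mu i + lam))\<^sup>2 = mu i + lam" for i
    using assms(2) eigenvalues_nonneg[of i] by simp
  ultimately show ?thesis
    using orthogonal_U
    by (simp add: normalized_response_eq expectation_spectral_filter_error row_norms_scaled_design
        Sig_eq orth_diag_vec_coord[OF orthogonal_U] power_mult_distrib sum_distrib_left mult_ac
        del: transpose_matrix_vector)
qed

lemma (in white_noise) gf_risk_eq:
  fixes X :: "real^'p::finite^'n"
  assumes eigen: "sample_cov_eigen X U mu" and lam: "0 \<le> lam"
  shows "expectation (\<lambda>\<omega>.
      (norm (mat_sqrt (Sig_lam X lam) *v (gf X lam t (X *v beta0 + eps \<omega>) - \<gamma>)))\<^sup>2)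
    = (\<Sum>i\<in>UNIV. (mu i + lam) * ((1 - exp (- t * (mu i + lam)))
          * (transpose U *v beta_lam X beta0 lam) $ i - (transpose U *v \<gamma>) $ i)\<^sup>2)
      + sigma\<^sup>2 / real CARD('n) * (\<Sum>i\<in>UNIV. (mu i + lam) * mu i
          * (inverse (mu i + lam) * (1 - exp (- t * (mu i + lam))))\<^sup>2)"
proof -
  interpret sample_cov_eigen X U mu
    by (fact eigen)
  show ?thesis
    using lam by (simp add: gf_eq spectral_estimator_risk[OF eigen] beta_lam_coord mult_ac
        del: transpose_matrix_vector)
qed

lemma (in white_noise) ridge_risk_eq:
  fixes X :: "real^'p::finite^'n"
  assumes eigen: "sample_cov_eigen X U mu" and lam: "0 \<le> lam" and t: "0 < t"
  shows "expectation (\<lambda>\<omega>.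
      (norm (mat_sqrt (Sig_lam X lam) *v (ridge X (lam + 1 / t) (X *v beta0 + eps \<omega>) - \<gamma>)))\<^sup>2)
    = (\<Sum>i\<in>UNIV. (mu i + lam) * ((1 - inverse (1 + t * (mu i + lam)))
          * (transpose U *v beta_lam X beta0 lam) $ i - (transpose U *v \<gamma>) $ i)\<^sup>2)
      + sigma\<^sup>2 / real CARD('n)
        * (\<Sum>i\<in>UNIV. (mu i + lam) * mu i * (inverse (mu i + lam + 1 / t))\<^sup>2)"
proof -
  interpret sample_cov_eigen X U mu
    by (fact eigen)
  show ?thesis
    using lam t eigenvalues_nonneg
    by (simp add: ridge_eq spectral_estimator_risk[OF eigen] ridge_coefficient_eq beta_lam_coord
        add.assoc[symmetric] del: transpose_matrix_vector)
qed

lemma (in white_noise) gf_risk_le_ridge_risk: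
  fixes X :: "real^'p::finite^'n"
  assumes lam: "0 \<le> lam" and t: "0 < t"
    and cond: "0 \<le> inner ((Sig_lam X lam ** (matrix_inv (mat 1 + t *\<^sub>R Sig_lam X lam)
                                 - mat_exp ((- t) *\<^sub>R Sig_lam X lam))) *v beta_lam X beta0 lam)
            (\<gamma> - beta_lam X beta0 lam)"
  shows "expectation (\<lambda>\<omega>.
      (norm (mat_sqrt (Sig_lam X lam) *v (gf X lam t (X *v beta0 + eps \<omega>) - \<gamma>)))\<^sup>2)
    \<le> 1.2985\<^sup>2 * expectation (\<lambda>\<omega>.
         (norm (mat_sqrt (Sig_lam X lam) *v (ridge X (lam + 1 / t) (X *v beta0 + eps \<omega>) - \<gamma>)))\<^sup>2)"
proof -
  obtain U mu where eigen: "sample_cov_eigen X U mu"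
    using sample_cov_eigen_exists .
  interpret sample_cov_eigen X U mu
    by (fact eigen)
  have "0 \<le> (\<Sum>i\<in>UNIV. (mu i + lam) * (inverse (1 + t * (mu i + lam)) - exp (- t * (mu i + lam)))
      * (transpose U *v beta_lam X beta0 lam) $ i
      * ((transpose U *v \<gamma>) $ i - (transpose U *v beta_lam X beta0 lam) $ i))"
    using cond unfolding inner_gap_beta_lam_eq[OF lam less_imp_le[OF t]]
    by (simp add: matrix_vector_mult_diff_distrib del: transpose_matrix_vector)
  then show ?thesis
    unfolding gf_risk_eq[OF eigen lam] ridge_risk_eq[OF eigen lam t]
    by (intro spectral_risk_sum_le eigenvalues_nonneg lam t) simp_all
qed

lemma beta_lam_gap_condition:
  fixes X :: "real^'p::finite^'n::finite"
  assumes "0 \<le> lam'" "lam' \<le> lam" "0 \<le> t"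
  shows "0 \<le> inner ((Sig_lam X lam ** (matrix_inv (mat 1 + t *\<^sub>R Sig_lam X lam)
                                 - mat_exp ((- t) *\<^sub>R Sig_lam X lam))) *v beta_lam X beta0 lam)
            (beta_lam X beta0 lam' - beta_lam X beta0 lam)"
proof -
  obtain U mu where eigen: "sample_cov_eigen X U mu"
    using sample_cov_eigen_exists .
  interpret sample_cov_eigen X U mu
    by (fact eigen)
  have lam: "0 \<le> lam"
    using assms by simp
  show ?thesis
    unfolding inner_gap_beta_lam_eq[OF lam assms(3)] matrix_vector_mult_diff_distrib
  proof (intro sum_nonneg)
    fix i
    let ?s = "mu i + lam" and ?b = "(transpose U *v beta0) $ i"
    have "0 \<le> ?s * (inverse (1 + t * ?s) - exp (- t * ?s))"
      using lam assms(3) eigenvalues_nonneg[of i] exp_neg_le_inverse_one_plus[of "t * ?s"] by simp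
    then have "0 \<le> ?s * (inverse (1 + t * ?s) - exp (- t * ?s))
        * (inverse ?s * (mu i * ?b) * (inverse (mu i + lam') * (mu i * ?b) - inverse ?s * (mu i * ?b)))"
      using ridge_path_coord_mult_increment_nonneg[OF eigenvalues_nonneg assms(1,2)]
      by (rule mult_nonneg_nonneg)
    then show "0 \<le> ?s * (inverse (1 + t * ?s) - exp (- t * ?s))
        * (transpose U *v beta_lam X beta0 lam) $ i
        * (transpose U *v beta_lam X beta0 lam' - transpose U *v beta_lam X beta0 lam) $ i"
      using assms lam by (simp add: beta_lam_coord mult.assoc del: transpose_matrix_vector)
  qed
qed

theorem proposition3p2:
  fixes M :: "'a measure"
    and X :: "real^'p::finite^'n::finite"
    and beta0 :: "real^'p"
    and eps :: "'a \<Rightarrow> real^'n"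
    and sigma lam t :: real
  assumes "prob_space M"
    and eps_int: "\<And>i. integrable M (\<lambda>\<omega>. eps \<omega> $ i)"
    and eps_int2: "\<And>i j. integrable M (\<lambda>\<omega>. eps \<omega> $ i * eps \<omega> $ j)"
    and eps_mean: "\<And>i. prob_space.expectation M (\<lambda>\<omega>. eps \<omega> $ i) = 0"
    and eps_cov: "\<And>i j. prob_space.expectation M (\<lambda>\<omega>. eps \<omega> $ i * eps \<omega> $ j)
                     = (if i = j then sigma\<^sup>2 else 0)"
    and beta0_row: "beta0 = (pinv X ** X) *v beta0"
    and lam: "lam \<ge> 0"
    and t: "t > 0"
  shows
   "(\<forall>\<gamma>::real^'p.
      inner ((Sig_lam X lam ** (matrix_inv (mat 1 + t *\<^sub>R Sig_lam X lam)
                                 - mat_exp ((- t) *\<^sub>R Sig_lam X lam))) *v beta_lam X beta0 lam)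
            (\<gamma> - beta_lam X beta0 lam) \<ge> 0
      \<longrightarrow>
      prob_space.expectation M (\<lambda>\<omega>.
         (norm (mat_sqrt (Sig_lam X lam) *v (gf X lam t (X *v beta0 + eps \<omega>) - \<gamma>)))\<^sup>2)
      \<le> 1.2985\<^sup>2 * prob_space.expectation M (\<lambda>\<omega>.
         (norm (mat_sqrt (Sig_lam X lam) *v (ridge X (lam + 1 / t) (X *v beta0 + eps \<omega>) - \<gamma>)))\<^sup>2))
    \<and>
    (\<forall>lam'\<in>{0..lam}.
      inner ((Sig_lam X lam ** (matrix_inv (mat 1 + t *\<^sub>R Sig_lam X lam)
                                 - mat_exp ((- t) *\<^sub>R Sig_lam X lam))) *v beta_lam X beta0 lam)
            (beta_lam X beta0 lam' - beta_lam X beta0 lam) \<ge> 0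
      \<and>
      prob_space.expectation M (\<lambda>\<omega>.
         (norm (mat_sqrt (Sig_lam X lam) *v (gf X lam t (X *v beta0 + eps \<omega>) - beta_lam X beta0 lam')))\<^sup>2)
      \<le> 1.2985\<^sup>2 * prob_space.expectation M (\<lambda>\<omega>.
         (norm (mat_sqrt (Sig_lam X lam) *v (ridge X (lam + 1 / t) (X *v beta0 + eps \<omega>) - beta_lam X beta0 lam')))\<^sup>2))"
proof -
  interpret white_noise M eps sigma
    using assms(1-5) by (intro white_noise.intro white_noise_axioms.intro)
  have gf_vs_ridge: "expectation (\<lambda>\<omega>.
         (norm (mat_sqrt (Sig_lam X lam) *v (gf X lam t (X *v beta0 + eps \<omega>) - \<gamma>)))\<^sup>2)
      \<le> 1.2985\<^sup>2 * expectation (\<lambda>\<omega>.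
         (norm (mat_sqrt (Sig_lam X lam) *v (ridge X (lam + 1 / t) (X *v beta0 + eps \<omega>) - \<gamma>)))\<^sup>2)"
    if "inner ((Sig_lam X lam ** (matrix_inv (mat 1 + t *\<^sub>R Sig_lam X lam)
                                 - mat_exp ((- t) *\<^sub>R Sig_lam X lam))) *v beta_lam X beta0 lam)
            (\<gamma> - beta_lam X beta0 lam) \<ge> 0" for \<gamma>
    using gf_risk_le_ridge_risk[OF lam t that] .
  moreover have "inner ((Sig_lam X lam ** (matrix_inv (mat 1 + t *\<^sub>R Sig_lam X lam)
                                 - mat_exp ((- t) *\<^sub>R Sig_lam X lam))) *v beta_lam X beta0 lam)
            (beta_lam X beta0 lam' - beta_lam X beta0 lam) \<ge> 0" if "lam' \<in> {0..lam}" for lam'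
    using that t by (intro beta_lam_gap_condition) auto
  ultimately show ?thesis
    by blast
qed

end
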